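(* Let $\epsilon$ be a fixed constant with $0<\epsilon<1$ and let $d=o(\sqrt{n})$. Any randomized one-pass streaming algorithm that, on every input stream $S$ of length $n$ (over the binary alphabet), returns an estimate $\hat{\ell}$ satisfying $\hat{\ell}\le\ell_{max}\le(1+\epsilon)\hat{\ell}$ with probability at least $1-\frac{1}{n}$ must use $\Omega(d\log n)$ bits of space.
   Context: Streaming model: the symbols of the input string arrive one at a time and the algorithm keeps only its working memory, measured in bits. For a string $T$ of length $m$, $T^R$ denotes its reverse and $\mathsf{HAM}(T,T^R)=|\{i\in[m]: T[i]\neq T[m+1-i]\}|$. $T$ is a $d$-near-palindrome if $\mathsf{HAM}(T,T^R)\le d$. $\ell_{max}$ is the maximum length of a substring of the input that is a $d$-near-palindrome. *)

theory Defs
  imports "HOL-Probability.Probability" "HOL-Library.Landau_Symbols"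
begin

definition HAM_rev :: "bool list \<Rightarrow> nat" where
  "HAM_rev T = card {i. i < length T \<and> T ! i \<noteq> T ! (length T - 1 - i)}"

definition near_palindrome :: "nat \<Rightarrow> bool list \<Rightarrow> bool" where
  "near_palindrome d T \<longleftrightarrow> HAM_rev T \<le> d"

definition substr :: "bool list \<Rightarrow> nat \<Rightarrow> nat \<Rightarrow> bool list" where
  "substr S i j = take (j - i) (drop i S)"

definition l_max :: "nat \<Rightarrow> bool list \<Rightarrow> nat" where
  "l_max d S = Max {j - i | i j. i \<le> j \<and> j \<le> length S \<and> near_palindrome d (substr S i j)}"

text \<open>A randomized one-pass streaming algorithm with private coins.
  Its memory states are natural numbers; with s bits of space all states lie in {..<2^s}.
  init: random initial state; delta i q b: random next state after reading symbol b at
  position i (dependence on i only strengthens the model); out q: random estimate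
  produced from final state q.\<close>
definition uses_space ::
  "nat \<Rightarrow> nat pmf \<Rightarrow> (nat \<Rightarrow> nat \<Rightarrow> bool \<Rightarrow> nat pmf) \<Rightarrow> bool" where
  "uses_space s init delta \<longleftrightarrow>
     set_pmf init \<subseteq> {..<2^s} \<and>
     (\<forall>i q b. q < 2^s \<longrightarrow> set_pmf (delta i q b) \<subseteq> {..<2^s})"

fun run_states :: "nat pmf \<Rightarrow> (nat \<Rightarrow> nat \<Rightarrow> bool \<Rightarrow> nat pmf) \<Rightarrow> nat \<Rightarrow> bool list \<Rightarrow> nat pmf" where
  "run_states init delta i [] = init"
| "run_states init delta i (b # bs) =
     run_states (init \<bind> (\<lambda>q. delta i q b)) delta (Suc i) bs"

definition run_alg ::
  "nat pmf \<Rightarrow> (nat \<Rightarrow> nat \<Rightarrow> bool \<Rightarrow> nat pmf) \<Rightarrow> (nat \<Rightarrow> real pmf) \<Rightarrow> bool list \<Rightarrow> real pmf" where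
  "run_alg init delta out S = run_states init delta 0 S \<bind> out"

end

theory Submission
  imports Defs
begin

text \<open>
  A fooling-set argument. The base word is the palindrome obtained by mirroring the 6-periodic
  word 001011 about the centre; on any six consecutive positions this word differs from each of
  its non-trivial shifts and from each of its reflections. For a set X of k = d div 2 + 1
  positions in the second quarter and one position j there, flip the positions of X in the
  first half and the mirror image of j in the second half. If j \<in> X the two flips of j cancel,
  the word has at most 2(k - 1) \<le> d mismatches with its reverse, and \<ell>_max = n. If j \<notin> X, every
  window longer than n/2 has more than d mismatches: when its centre is far from the centre of
  the word, or offset by an amount not divisible by 6, the base word alone produces them, and
  otherwise the k + 1 flips do, since they cannot be matched by their mirror images. A
  (1 + \<epsilon>)-approximation of \<ell>_max separates the two cases, so the memory state after the first half
  determines X among (n div 10 choose k) sets, and s \<ge> log (n div 10 choose k) = \<Omega>(d log n).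
\<close>

section \<open>A pattern far from its shifts and reflections\<close>

definition pattern :: "nat \<Rightarrow> bool" where "pattern r \<longleftrightarrow> r mod 6 \<in> {2, 4, 5}"

lemma pattern_mod: "pattern (r mod 6) = pattern r"
  by (simp add: pattern_def)

lemma pattern_add_period: "6 dvd t \<Longrightarrow> pattern (y + t) = pattern y"
  by (metis dvd_imp_mod_0 mod_add_right_eq add_0_right pattern_mod)

lemma mod_6_cases: "(r::nat) mod 6 \<in> {0, 1, 2, 3, 4, 5}"
  by auto

lemma pattern_reflection_witness:
  assumes "a + 5 \<le> c"
  shows "\<exists>y. a \<le> y \<and> y < a + 6 \<and> pattern y \<noteq> pattern (c - y)"
proof -
  have "\<forall>r\<in>{0, 1, 2, 3, 4, 5}. \<forall>e\<in>{0, 1, 2, 3, 4, 5}. \<exists>i\<in>{0, 1, 2, 3, 4, 5::nat}.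
          pattern ((r + i) mod 6) \<noteq> pattern ((e + (5 - i)) mod 6)"
    by (simp add: pattern_def)
  from bspec[OF bspec[OF this mod_6_cases] mod_6_cases]
  obtain i where i: "i \<in> {0, 1, 2, 3, 4, 5}"
    "pattern ((a mod 6 + i) mod 6) \<noteq> pattern (((c - a - 5) mod 6 + (5 - i)) mod 6)"
    by blast
  have "c - (a + i) = (c - a - 5) + (5 - i)"
    using assms i(1) by auto
  then have "pattern (a + i) \<noteq> pattern (c - (a + i))"
    using i(2) by (metis mod_add_left_eq pattern_mod)
  then show ?thesis
    using i(1) by (intro exI[of _ "a + i"]) auto
qed

lemma pattern_shift_witness:
  assumes "\<not> 6 dvd t"
  shows "\<exists>y. a \<le> y \<and> y < a + 6 \<and> pattern y \<noteq> pattern (y + t)"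
proof -
  have table: "\<forall>r\<in>{0, 1, 2, 3, 4, 5}. \<forall>s\<in>{1, 2, 3, 4, 5}. \<exists>i\<in>{0, 1, 2, 3, 4, 5::nat}.
          pattern ((r + i) mod 6) \<noteq> pattern ((r + i + s) mod 6)"
    by (simp add: pattern_def)
  have "t mod 6 \<in> {1, 2, 3, 4, 5}"
    using assms mod_6_cases[of t] by (auto simp: dvd_eq_mod_eq_0)
  then have "\<exists>i\<in>{0, 1, 2, 3, 4, 5}. pattern ((a mod 6 + i) mod 6) \<noteq> pattern ((a mod 6 + i + t mod 6) mod 6)"
    by (rule bspec[OF bspec[OF table mod_6_cases]])
  then obtain i where i: "i \<in> {0, 1, 2, 3, 4, 5}"
    "pattern ((a mod 6 + i) mod 6) \<noteq> pattern ((a mod 6 + i + t mod 6) mod 6)"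
    by blast
  then have "pattern (a + i) \<noteq> pattern (a + i + t)"
    by (metis mod_add_left_eq mod_add_right_eq pattern_mod)
  then show ?thesis
    using i(1) by (intro exI[of _ "a + i"]) auto
qed

lemma card_ge_of_block_witnesses:
  assumes "\<And>b. b < K \<Longrightarrow> \<exists>y. a + m * b \<le> y \<and> y < a + m * b + m \<and> P y"
  shows "K \<le> card {y. a \<le> y \<and> y < a + m * K \<and> P y}"
proof -
  obtain f where f: "\<And>b. b < K \<Longrightarrow> a + m * b \<le> f b \<and> f b < a + m * b + m \<and> P (f b)"
    using assms by metis
  have "inj_on f {..<K}"
  proof (rule inj_onI)
    fix b b' assume "b \<in> {..<K}" "b' \<in> {..<K}" "f b = f b'"
    then have "m * b < m * Suc b'" "m * b' < m * Suc b"
      using f[of b] f[of b'] by auto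
    then show "b = b'"
      unfolding mult_less_cancel1 by linarith
  qed
  moreover have "f ` {..<K} \<subseteq> {y. a \<le> y \<and> y < a + m * K \<and> P y}"
  proof clarify
    fix b assume "b < K"
    then have "m * Suc b \<le> m * K"
      by (intro mult_le_mono2) simp
    then have "a + m * b + m \<le> a + m * K"
      by simp
    then show "a \<le> f b \<and> f b < a + m * K \<and> P (f b)"
      using f[OF \<open>b < K\<close>] by auto
  qed
  moreover have "finite {y. a \<le> y \<and> y < a + m * K \<and> P y}"
    by (rule finite_subset[of _ "{..<a + m * K}"]) auto
  ultimately show ?thesis
    using card_inj_on_le[of f "{..<K}"] by simp
qed

section \<open>The base word and mismatch sets of windows\<close>

definition base_word :: "nat \<Rightarrow> nat \<Rightarrow> bool" where
  "base_word n y = pattern (min y (n - 1 - y))"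

lemma base_word_left:
  assumes "2 * y < n"
  shows "base_word n y = pattern y"
proof -
  have "min y (n - 1 - y) = y"
    using assms by linarith
  then show ?thesis
    unfolding base_word_def by simp
qed

lemma base_word_right:
  assumes "n \<le> 2 * y + 1"
  shows "base_word n y = pattern (n - 1 - y)"
proof -
  have "min y (n - 1 - y) = n - 1 - y"
    using assms by linarith
  then show ?thesis
    unfolding base_word_def by simp
qed

lemma base_word_reflect: "y < n \<Longrightarrow> base_word n (n - 1 - y) = base_word n y"
  by (simp add: base_word_def min.commute)

definition mismatches :: "(nat \<Rightarrow> bool) \<Rightarrow> nat \<Rightarrow> nat \<Rightarrow> nat set" where
  "mismatches g p q = {y. p \<le> y \<and> y < q \<and> g y \<noteq> g (p + q - 1 - y)}"

lemma finite_mismatches [simp]: "finite (mismatches g p q)"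
  unfolding mismatches_def by (rule finite_subset[of _ "{..<q}"]) auto

lemma mirror_in_window:
  fixes p q y :: nat
  assumes "p \<le> y" "y < q"
  shows "p \<le> p + q - 1 - y" "p + q - 1 - y < q" "p + q - 1 - (p + q - 1 - y) = y"
  using assms by linarith+

lemma mismatches_cong:
  "(\<And>y. p \<le> y \<Longrightarrow> y < q \<Longrightarrow> g y = g' y) \<Longrightarrow> mismatches g p q = mismatches g' p q"
  unfolding mismatches_def using mirror_in_window by (intro Collect_cong) auto

lemma HAM_rev_substr_map:
  assumes "p \<le> q" "q \<le> n"
  shows "HAM_rev (substr (map g [0..<n]) p q) = card (mismatches g p q)"
proof -
  have "substr (map g [0..<n]) p q = map g [p..<q]"
    unfolding substr_def using assms by (simp add: drop_map take_map)
  moreover have "HAM_rev (map g [p..<q])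
      = card {i. i < q - p \<and> g (p + i) \<noteq> g (p + (q - p - 1 - i))}"
    unfolding HAM_rev_def by (rule arg_cong[where f = card]) (auto simp: nth_upt)
  moreover have "mismatches g p q = (\<lambda>i. p + i) ` {i. i < q - p \<and> g (p + i) \<noteq> g (p + (q - p - 1 - i))}"
  proof (intro equalityI subsetI)
    fix y assume y: "y \<in> mismatches g p q"
    then have "y - p < q - p" "y = p + (y - p)" "p + (q - p - 1 - (y - p)) = p + q - 1 - y"
      unfolding mismatches_def by auto
    then show "y \<in> (\<lambda>i. p + i) ` {i. i < q - p \<and> g (p + i) \<noteq> g (p + (q - p - 1 - i))}"
      using y unfolding mismatches_def by (intro image_eqI[of _ _ "y - p"]) auto
  next
    fix y assume "y \<in> (\<lambda>i. p + i) ` {i. i < q - p \<and> g (p + i) \<noteq> g (p + (q - p - 1 - i))}"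
    then obtain i where "i < q - p" "g (p + i) \<noteq> g (p + (q - p - 1 - i))" "y = p + i"
      by blast
    moreover have "p + (q - p - 1 - i) = p + q - 1 - (p + i)"
      using \<open>i < q - p\<close> by simp
    ultimately show "y \<in> mismatches g p q"
      unfolding mismatches_def by auto
  qed
  ultimately show ?thesis
    by (simp add: card_image)
qed

lemma card_mismatches_mirror:
  assumes "q \<le> n"
  shows "card (mismatches (\<lambda>y. g (n - 1 - y)) (n - q) (n - p)) = card (mismatches g p q)"
proof (cases "p < q")
  case False
  then have "mismatches g p q = {}" "mismatches (\<lambda>y. g (n - 1 - y)) (n - q) (n - p) = {}"
    unfolding mismatches_def by auto
  then show ?thesis
    by simp
next
  case True
  define a b c c' where "a = n - q" and "b = n - p" and "c = p + q - 1" and "c' = a + b - 1"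
  have eqs: "a + q = n" "b + p = n" "c + 1 = p + q" "c' + 1 = a + b"
    using True assms unfolding a_def b_def c_def c'_def by linarith+
  have "mismatches (\<lambda>y. g (n - 1 - y)) a b = (\<lambda>z. n - 1 - z) ` mismatches g p q"
  proof (intro equalityI subsetI)
    fix y assume "y \<in> mismatches (\<lambda>y. g (n - 1 - y)) a b"
    then have y: "a \<le> y" "y < b" "g (n - 1 - y) \<noteq> g (n - 1 - (c' - y))"
      unfolding mismatches_def c'_def by simp_all
    then have "y + (n - 1 - y) + 1 = n"
      using eqs by linarith
    then have "p \<le> n - 1 - y" "n - 1 - y < q" "n - 1 - (c' - y) = c - (n - 1 - y)"
      using y(1,2) eqs by linarith+
    then show "y \<in> (\<lambda>z. n - 1 - z) ` mismatches g p q"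
      using y \<open>y + (n - 1 - y) + 1 = n\<close> unfolding mismatches_def c_def[symmetric]
      by (intro image_eqI[of _ _ "n - 1 - y"]) auto
  next
    fix y assume "y \<in> (\<lambda>z. n - 1 - z) ` mismatches g p q"
    then obtain z where z: "p \<le> z" "z < q" "g z \<noteq> g (c - z)" "y = n - 1 - z"
      unfolding mismatches_def c_def by blast
    then have "y + z + 1 = n"
      using eqs by linarith
    then have "a \<le> y" "y < b" "n - 1 - y = z" "n - 1 - (c' - y) = c - z"
      using z(1,2) eqs by linarith+
    then show "y \<in> mismatches (\<lambda>y. g (n - 1 - y)) a b"
      using z(3) unfolding mismatches_def c'_def[symmetric] by simp
  qed
  moreover have "inj_on (\<lambda>z. n - 1 - z) (mismatches g p q)"
  proof (rule inj_onI)
    fix x y assume "x \<in> mismatches g p q" "y \<in> mismatches g p q" "n - 1 - x = n - 1 - y"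
    moreover have "x < n" "y < n"
      using calculation(1,2) assms unfolding mismatches_def by auto
    ultimately show "x = y"
      by linarith
  qed
  ultimately show ?thesis
    unfolding a_def b_def by (simp add: card_image)
qed

definition flip_at :: "nat set \<Rightarrow> (nat \<Rightarrow> bool) \<Rightarrow> nat \<Rightarrow> bool" where
  "flip_at F g y \<longleftrightarrow> g y \<noteq> (y \<in> F)"

lemma flip_at_mirror:
  assumes "\<And>y. y < n \<Longrightarrow> g (n - 1 - y) = g y" "F \<subseteq> {..<n}" "y < n"
  shows "flip_at F g (n - 1 - y) = flip_at ((\<lambda>m. n - 1 - m) ` F) g y"
proof -
  have "n - 1 - y \<in> F \<longleftrightarrow> y \<in> (\<lambda>m. n - 1 - m) ` F"
    using assms(2,3) by (auto simp: image_iff subset_iff intro!: bexI[of _ "n - 1 - y"])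
  then show ?thesis
    unfolding flip_at_def using assms(1,3) by simp
qed

lemma mismatches_flip_at_outside:
  "mismatches g p q - (F \<union> (\<lambda>f. p + q - 1 - f) ` F) \<subseteq> mismatches (flip_at F g) p q"
proof
  fix y assume y: "y \<in> mismatches g p q - (F \<union> (\<lambda>f. p + q - 1 - f) ` F)"
  then have window: "p \<le> y" "y < q"
    unfolding mismatches_def by auto
  have "p + q - 1 - y \<notin> F"
  proof
    assume "p + q - 1 - y \<in> F"
    then have "p + q - 1 - (p + q - 1 - y) \<in> (\<lambda>f. p + q - 1 - f) ` F"
      by (rule imageI)
    then show False
      using y mirror_in_window(3)[OF window] by simp
  qed
  then show "y \<in> mismatches (flip_at F g) p q"
    using y unfolding mismatches_def flip_at_def by auto
qed

lemma card_mismatches_le_flip_at: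
  assumes "finite F"
  shows "card (mismatches g p q) \<le> card (mismatches (flip_at F g) p q) + 2 * card F"
proof -
  let ?R = "F \<union> (\<lambda>f. p + q - 1 - f) ` F"
  have "card (mismatches g p q) \<le> card (mismatches g p q - ?R) + card ?R"
    using diff_card_le_card_Diff[of ?R "mismatches g p q"] assms by simp
  also have "\<dots> \<le> card (mismatches (flip_at F g) p q) + card ?R"
    using card_mono[OF finite_mismatches mismatches_flip_at_outside] by simp
  also have "card ?R \<le> 2 * card F"
    using card_Un_le[of F "(\<lambda>f. p + q - 1 - f) ` F"] card_image_le[OF assms, of "\<lambda>f. p + q - 1 - f"]
    by linarith
  finally show ?thesis
    by simp
qed

lemma mismatches_flip_at_symmetric:
  assumes "\<And>f. f \<in> F \<Longrightarrow> p \<le> f \<and> f < q \<and> g f = g (p + q - 1 - f)"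
  defines "F' \<equiv> (\<lambda>f. p + q - 1 - f) ` F"
  shows "mismatches (flip_at F g) p q = (mismatches g p q - (F \<union> F')) \<union> (F - F') \<union> (F' - F)"
proof (rule set_eqI)
  fix y
  have F': "p \<le> y \<and> y < q \<and> g y = g (p + q - 1 - y)" if "y \<in> F'"
  proof -
    from that obtain f where f: "f \<in> F" "y = p + q - 1 - f"
      unfolding F'_def by blast
    with assms have "p \<le> f" "f < q" "g f = g (p + q - 1 - f)"
      by auto
    then show ?thesis
      using f(2) mirror_in_window[of p f q] by auto
  qed
  show "y \<in> mismatches (flip_at F g) p q \<longleftrightarrow> y \<in> (mismatches g p q - (F \<union> F')) \<union> (F - F') \<union> (F' - F)"
  proof (cases "p \<le> y \<and> y < q")
    case False
    then show ?thesis
      using assms F' unfolding mismatches_def by auto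
  next
    case True
    have "p + q - 1 - y \<in> F \<longleftrightarrow> y \<in> F'"
    proof
      assume "p + q - 1 - y \<in> F"
      then show "y \<in> F'"
        unfolding F'_def using mirror_in_window(3)[of p y q] True by (metis image_eqI)
    next
      assume "y \<in> F'"
      then obtain f where "f \<in> F" "y = p + q - 1 - f"
        unfolding F'_def by blast
      then show "p + q - 1 - y \<in> F"
        using assms mirror_in_window(3)[of p f q] by auto
    qed
    moreover have "g y = g (p + q - 1 - y)" if "y \<in> F \<union> F'"
      using that assms F' by blast
    ultimately show ?thesis
      using True unfolding mismatches_def flip_at_def by auto
  qed
qed

lemma card_mismatches_flip_at_symmetric:
  assumes "finite F" "\<And>f. f \<in> F \<Longrightarrow> p \<le> f \<and> f < q \<and> g f = g (p + q - 1 - f)"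
  defines "F' \<equiv> (\<lambda>f. p + q - 1 - f) ` F"
  shows "card (mismatches (flip_at F g) p q) + 2 * card (F \<inter> F')
       = card (mismatches g p q - (F \<union> F')) + 2 * card F"
proof -
  have finF': "finite F'"
    unfolding F'_def using assms(1) by simp
  have "inj_on (\<lambda>f. p + q - 1 - f) F"
  proof (rule inj_onI)
    fix x y assume "x \<in> F" "y \<in> F" "p + q - 1 - x = p + q - 1 - y"
    moreover have "x < q" "y < q"
      using assms(2) \<open>x \<in> F\<close> \<open>y \<in> F\<close> by auto
    ultimately show "x = y"
      by linarith
  qed
  then have "card F' = card F"
    unfolding F'_def by (rule card_image)
  moreover have "card F = card (F \<inter> F') + card (F - F')" "card F' = card (F \<inter> F') + card (F' - F)"
    using card_Int_Diff[OF assms(1), of F'] card_Int_Diff[OF finF', of F] by (simp_all add: Int_commute)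
  moreover have "card (mismatches (flip_at F g) p q)
      = card (mismatches g p q - (F \<union> F')) + card (F - F') + card (F' - F)"
  proof -
    let ?M = "mismatches g p q - (F \<union> F')"
    have "card (?M \<union> (F - F') \<union> (F' - F)) = card (?M \<union> (F - F')) + card (F' - F)"
      by (rule card_Un_disjoint) (use assms(1) finF' in auto)
    also have "card (?M \<union> (F - F')) = card ?M + card (F - F')"
      by (rule card_Un_disjoint) (use assms(1) in auto)
    finally show ?thesis
      using mismatches_flip_at_symmetric[OF assms(2)] unfolding F'_def by simp
  qed
  ultimately show ?thesis
    by linarith
qed

section \<open>Long windows of a flipped base word\<close>

lemma card_Un_mirror:
  fixes A B :: "nat set"
  assumes "finite A" "finite B" "\<And>z. z \<in> A \<union> B \<Longrightarrow> 2 * z + 1 < n"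
  shows "card (A \<union> (\<lambda>m. n - 1 - m) ` B) = card A + card B"
proof -
  have "A \<inter> (\<lambda>m. n - 1 - m) ` B = {}"
  proof -
    have False if "a \<in> A" "m \<in> B" "a = n - 1 - m" for a m
    proof -
      have "2 * a + 1 < n" "2 * m + 1 < n"
        using assms(3) that(1,2) by auto
      then show False
        using that(3) by linarith
    qed
    then show ?thesis
      by blast
  qed
  moreover have "inj_on (\<lambda>m. n - 1 - m) B"
  proof (rule inj_onI)
    fix x y assume "x \<in> B" "y \<in> B" "n - 1 - x = n - 1 - y"
    moreover have "2 * x + 1 < n" "2 * y + 1 < n"
      using assms(3) \<open>x \<in> B\<close> \<open>y \<in> B\<close> by auto
    ultimately show "x = y"
      by linarith
  qed
  ultimately show ?thesis
    using assms(1,2) by (simp add: card_Un_disjoint card_image)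
qed

context
  fixes n K p q :: nat
  assumes K_pos: "0 < K"
    and n_large: "100 * K \<le> n"
    and window_left: "p + q \<le> n"
    and window_long: "n < 2 * (q - p)"
begin

lemma far_window_base_mismatches:
  assumes far: "6 * K \<le> n - (p + q)"
  shows "K \<le> card (mismatches (base_word n) p q)"
proof -
  define c where "c = p + q - 1"
  define h where "h = (n - 1) div 2"
  define a where "a = max p (c - h)"
  have c: "c + 1 + 6 * K \<le> n" "c + 1 = p + q" "4 * p + 2 * (n - c) < n + 2"
    using far window_left window_long unfolding c_def by linarith+
  have "n - 1 = 2 * h + (n - 1) mod 2" "(n - 1) mod 2 < 2"
    unfolding h_def by simp_all
  then have h: "2 * h < n" "n \<le> 2 * h + 2"
    using K_pos n_large by linarith+
  \<comment> \<open>The blocks and their reflections about the window's centre lie in the left half,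
    where the base word is the pattern itself.\<close>
  have range: "p \<le> y \<and> y + p \<le> c \<and> 2 * y < n \<and> 2 * (c - y) < n"
    if "a \<le> y" "y < a + 6 * K" for y
  proof (cases "c - h \<le> p")
    case True
    then have "a = p"
      unfolding a_def by simp
    then show ?thesis
      using that True c h n_large by linarith
  next
    case False
    then have "a = c - h" "h \<le> c"
      unfolding a_def by auto
    then show ?thesis
      using that False c h n_large by linarith
  qed
  have "K \<le> card {y. a \<le> y \<and> y < a + 6 * K \<and> base_word n y \<noteq> base_word n (c - y)}"
  proof (rule card_ge_of_block_witnesses)
    fix b assume "b < K"
    then have "a + 6 * b + 5 \<le> c"
      using range[of "a + 6 * b + 5"] by linarith
    then obtain y where y: "a + 6 * b \<le> y" "y < a + 6 * b + 6" "pattern y \<noteq> pattern (c - y)"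
      using pattern_reflection_witness by blast
    moreover have "2 * y < n" "2 * (c - y) < n"
      using range[of y] y(1,2) \<open>b < K\<close> by linarith+
    ultimately show "\<exists>y. a + 6 * b \<le> y \<and> y < a + 6 * b + 6 \<and> base_word n y \<noteq> base_word n (c - y)"
      by (auto simp: base_word_left)
  qed
  also have "\<dots> \<le> card (mismatches (base_word n) p q)"
  proof (rule card_mono)
    show "{y. a \<le> y \<and> y < a + 6 * K \<and> base_word n y \<noteq> base_word n (c - y)} \<subseteq> mismatches (base_word n) p q"
      using range c(2) unfolding mismatches_def c_def by fastforce
  qed simp
  finally show ?thesis .
qed

lemma unaligned_window_base_mismatches:
  assumes near: "n - (p + q) < 6 * K" and unaligned: "\<not> 6 dvd (n - (p + q))"
  shows "K \<le> card (mismatches (base_word n) p q)"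
proof -
  define c where "c = p + q - 1"
  define \<delta> where "\<delta> = n - (p + q)"
  have c: "c + 1 + \<delta> = n" "c + 1 = p + q" "\<delta> < 6 * K" "4 * p + 2 * \<delta> < n"
    using near window_left window_long unfolding c_def \<delta>_def by linarith+
  \<comment> \<open>Reflecting about the window's centre carries the blocks to the right half, where the base
    word read backwards is the pattern shifted by \<delta>.\<close>
  have range: "y < q \<and> 2 * y < n \<and> n \<le> 2 * (c - y) + 1 \<and> n - 1 - (c - y) = y + \<delta>"
    if "p \<le> y" "y < p + 6 * K" for y
    using that c n_large by linarith
  have "K \<le> card {y. p \<le> y \<and> y < p + 6 * K \<and> base_word n y \<noteq> base_word n (c - y)}"
  proof (rule card_ge_of_block_witnesses)
    fix b assume "b < K"
    obtain y where y: "p + 6 * b \<le> y" "y < p + 6 * b + 6" "pattern y \<noteq> pattern (y + \<delta>)"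
      using pattern_shift_witness unaligned unfolding \<delta>_def by blast
    moreover have "y < q \<and> 2 * y < n \<and> n \<le> 2 * (c - y) + 1 \<and> n - 1 - (c - y) = y + \<delta>"
      using y(1,2) \<open>b < K\<close> by (intro range) linarith+
    ultimately show "\<exists>y. p + 6 * b \<le> y \<and> y < p + 6 * b + 6 \<and> base_word n y \<noteq> base_word n (c - y)"
      by (auto simp: base_word_left base_word_right)
  qed
  also have "\<dots> \<le> card (mismatches (base_word n) p q)"
  proof (rule card_mono)
    show "{y. p \<le> y \<and> y < p + 6 * K \<and> base_word n y \<noteq> base_word n (c - y)} \<subseteq> mismatches (base_word n) p q"
      using range unfolding mismatches_def c_def by fastforce
  qed simp
  finally show ?thesis .
qed


text \<open>
  The flips are at the positions of A and at the mirror images of the positions of B, where A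
  and B lie in the second quarter of the word, at distance at least 6K from its ends.
\<close>

context
  fixes A B :: "nat set"
  assumes finite_flips: "finite A" "finite B"
    and zone_low: "\<And>z. z \<in> A \<union> B \<Longrightarrow> n + 24 * K \<le> 4 * z"
    and zone_high: "\<And>z. z \<in> A \<union> B \<Longrightarrow> 2 * z + 12 * K + 3 \<le> n"
begin

text \<open>
  If the centre of the window is offset from the centre of the word by a multiple of 6 below 6K,
  the base word is symmetric about the centre of the window at all flips and their mirror
  images, so the flips themselves must create the mismatches.
\<close>

context
  assumes aligned: "6 dvd (n - (p + q))" "n - (p + q) < 6 * K"
begin

lemma flip_set_symmetric:
  assumes "f \<in> A \<union> (\<lambda>m. n - 1 - m) ` B"
  shows "p \<le> f \<and> f < q \<and> base_word n f = base_word n (p + q - 1 - f)"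
proof -
  define c where "c = p + q - 1"
  define \<delta> where "\<delta> = n - (p + q)"
  have c: "c + 1 + \<delta> = n" "c + 1 = p + q" "\<delta> < 6 * K" "4 * p + 2 * \<delta> < n"
    using aligned window_left window_long unfolding c_def \<delta>_def by linarith+
  have "p \<le> f \<and> f < q \<and> base_word n f = base_word n (c - f)"
    using assms
  proof
    assume "f \<in> A"
    then have "n + 24 * K \<le> 4 * f" "2 * f + 12 * K + 3 \<le> n"
      using zone_low zone_high by blast+
    then have "p \<le> f" "f < q" "2 * f < n" "n \<le> 2 * (c - f) + 1" "n - 1 - (c - f) = f + \<delta>"
      using c n_large by linarith+
    then show ?thesis
      using aligned(1) by (simp add: base_word_left base_word_right pattern_add_period \<delta>_def)
  next
    assume "f \<in> (\<lambda>m. n - 1 - m) ` B"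
    then obtain m where "m \<in> B" "f = n - 1 - m"
      by blast
    moreover have "n + 24 * K \<le> 4 * m" "2 * m + 12 * K + 3 \<le> n"
      using zone_low zone_high \<open>m \<in> B\<close> by blast+
    ultimately have "p \<le> f" "f < q" "n \<le> 2 * f + 1" "2 * (c - f) < n" "n - 1 - f = (c - f) + \<delta>"
      using c n_large by linarith+
    then show ?thesis
      using aligned(1) by (simp add: base_word_left base_word_right pattern_add_period \<delta>_def)
  qed
  then show ?thesis
    unfolding c_def .
qed

text \<open>
  A flip a \<in> A faces a flip in the window's reflection only if a + \<delta> \<in> B, and A or B has at
  most one element.
\<close>

lemma card_flip_set_inter_mirror:
  assumes small: "card A \<le> 1 \<or> card B \<le> 1"
    and centered: "p + q = n \<Longrightarrow> A \<inter> B = {}"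
  defines "F \<equiv> A \<union> (\<lambda>m. n - 1 - m) ` B"
  shows "card (F \<inter> (\<lambda>f. p + q - 1 - f) ` F) \<le> (if p + q = n then 0 else 2)"
proof -
  define c where "c = p + q - 1"
  define \<delta> where "\<delta> = n - (p + q)"
  have c: "c + 1 + \<delta> = n" "c + 1 = p + q" "\<delta> < 6 * K" "4 * p + 2 * \<delta> < n"
    using aligned window_left window_long unfolding c_def \<delta>_def by linarith+
  define E where "E = {a \<in> A. a + \<delta> \<in> B}"
  have zone: "n + 24 * K \<le> 4 * z" "2 * z + 12 * K + 3 \<le> n" if "z \<in> A \<union> B" for z
    using zone_low zone_high that by blast+
  have "F \<inter> (\<lambda>f. c - f) ` F \<subseteq> E \<union> (\<lambda>a. n - 1 - (a + \<delta>)) ` E"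
  proof
    fix y assume y: "y \<in> F \<inter> (\<lambda>f. c - f) ` F"
    then obtain f where f: "f \<in> F" "y = c - f"
      by blast
    from y f consider (AB) a m where "a \<in> A" "m \<in> B" "y = a" "f = n - 1 - m"
      | (BA) a m where "a \<in> A" "m \<in> B" "y = n - 1 - m" "f = a"
      | (AA) a a' where "a \<in> A" "a' \<in> A" "y = a" "f = a'"
      | (BB) m m' where "m \<in> B" "m' \<in> B" "y = n - 1 - m" "f = n - 1 - m'"
      unfolding F_def by blast
    then show "y \<in> E \<union> (\<lambda>a. n - 1 - (a + \<delta>)) ` E"
    proof cases
      case AB
      then have "a \<in> A \<union> B" "m \<in> A \<union> B"
        by blast+
      from zone[OF this(1)] zone[OF this(2)] have "m = a + \<delta>"
        using AB f(2) c n_large by linarith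
      then show ?thesis
        using AB unfolding E_def by blast
    next
      case BA
      then have "a \<in> A \<union> B" "m \<in> A \<union> B"
        by blast+
      from zone[OF this(1)] zone[OF this(2)] have "m = a + \<delta>"
        using BA f(2) c n_large by linarith
      then show ?thesis
        using BA unfolding E_def by blast
    next
      case AA
      then have "a \<in> A \<union> B" "a' \<in> A \<union> B"
        by blast+
      from zone[OF this(1)] zone[OF this(2)] have False
        using AA f(2) c n_large by linarith
      then show ?thesis ..
    next
      case BB
      then have "m \<in> A \<union> B" "m' \<in> A \<union> B"
        by blast+
      from zone[OF this(1)] zone[OF this(2)] have False
        using BB f(2) c n_large by linarith
      then show ?thesis ..
    qed
  qed
  then have "card (F \<inter> (\<lambda>f. c - f) ` F) \<le> card (E \<union> (\<lambda>a. n - 1 - (a + \<delta>)) ` E)"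
    using finite_flips by (intro card_mono) (simp_all add: E_def)
  also have "\<dots> \<le> 2 * card E"
    using card_Un_le[of E "(\<lambda>a. n - 1 - (a + \<delta>)) ` E"] card_image_le[of E "\<lambda>a. n - 1 - (a + \<delta>)"]
      finite_flips unfolding E_def by simp
  finally have "card (F \<inter> (\<lambda>f. c - f) ` F) \<le> 2 * card E" .
  moreover have "card E \<le> 1"
    using small
  proof
    assume "card A \<le> 1"
    then show ?thesis
      using card_mono[of A E] finite_flips unfolding E_def by auto
  next
    assume "card B \<le> 1"
    moreover have "card E = card ((\<lambda>a. a + \<delta>) ` E)"
      by (simp add: card_image)
    moreover have "card ((\<lambda>a. a + \<delta>) ` E) \<le> card B"
      using finite_flips by (intro card_mono) (auto simp: E_def)
    ultimately show ?thesis
      by linarith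
  qed
  moreover have "E = {}" if "p + q = n"
    using centered that unfolding E_def \<delta>_def by auto
  ultimately show ?thesis
    unfolding c_def by auto
qed

lemma near_middle_mismatches:
  assumes off_centre: "p + q < n"
  defines "F \<equiv> A \<union> (\<lambda>m. n - 1 - m) ` B"
  shows "2 \<le> card (mismatches (base_word n) p q - (F \<union> (\<lambda>f. p + q - 1 - f) ` F))"
proof -
  define c where "c = p + q - 1"
  define \<delta> where "\<delta> = n - (p + q)"
  define h where "h = (n - 1) div 2"
  have c: "c + 1 + \<delta> = n" "c + 1 = p + q" "\<delta> < 6 * K" "4 * p + 2 * \<delta> < n"
    using aligned window_left window_long unfolding c_def \<delta>_def by linarith+
  have "6 \<le> \<delta>"
    using aligned(1) off_centre unfolding \<delta>_def by (auto dest: dvd_imp_le)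
  have "n - 1 = 2 * h + (n - 1) mod 2" "(n - 1) mod 2 < 2"
    unfolding h_def by simp_all
  then have h: "2 * h < n" "n \<le> 2 * h + 2"
    using K_pos n_large by linarith+
  have outside: "z \<notin> F \<union> (\<lambda>f. c - f) ` F" if "2 * z < n" "n < 2 * z + 12 * K + 2" for z
  proof
    assume "z \<in> F \<union> (\<lambda>f. c - f) ` F"
    then consider (A) "z \<in> A" | (B) m where "m \<in> B" "z = n - 1 - m"
      | (cA) a where "a \<in> A" "z = c - a" | (cB) m where "m \<in> B" "z = c - (n - 1 - m)"
      unfolding F_def by blast
    then show False
    proof cases
      case A
      then show False
        using zone_high[of z] that by auto
    next
      case B
      then have "2 * m + 12 * K + 3 \<le> n"
        using zone_high by blast
      then show False
        using B(2) that by linarith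
    next
      case cA
      then have "2 * a + 12 * K + 3 \<le> n"
        using zone_high by blast
      then show False
        using cA(2) that c n_large by linarith
    next
      case cB
      then have "2 * m + 12 * K + 3 \<le> n"
        using zone_high by blast
      then show False
        using cB(2) that c by linarith
    qed
  qed
  have "c - h + 5 \<le> c"
    using c h n_large K_pos by linarith
  then obtain y where y: "c - h \<le> y" "y < c - h + 6" "pattern y \<noteq> pattern (c - y)"
    using pattern_reflection_witness by blast
  have mid: "p \<le> y" "y < q" "p \<le> c - y" "c - y < q" "c - (c - y) = y"
    "2 * y < n" "n < 2 * y + 12 * K + 2" "2 * (c - y) < n" "n < 2 * (c - y) + 12 * K + 2"
    using y(1,2) \<open>6 \<le> \<delta>\<close> c h n_large K_pos by linarith+
  have "{y, c - y} \<subseteq> mismatches (base_word n) p q - (F \<union> (\<lambda>f. c - f) ` F)"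
    using mid y(3) outside[of y] outside[of "c - y"]
    unfolding mismatches_def c_def[symmetric] by (auto simp: base_word_left)
  moreover have "y \<noteq> c - y"
    using y(3) by auto
  ultimately have "card {y, c - y} \<le> card (mismatches (base_word n) p q - (F \<union> (\<lambda>f. c - f) ` F))"
    by (intro card_mono) simp_all
  then show ?thesis
    using \<open>y \<noteq> c - y\<close> unfolding c_def by simp
qed

lemma aligned_window_mismatches:
  assumes "card A \<le> 1 \<or> card B \<le> 1" "p + q = n \<Longrightarrow> A \<inter> B = {}"
  shows "2 * (card A + card B)
       \<le> card (mismatches (flip_at (A \<union> (\<lambda>m. n - 1 - m) ` B) (base_word n)) p q) + 2"
proof -
  define F where "F = A \<union> (\<lambda>m. n - 1 - m) ` B"
  define R where "R = F \<inter> (\<lambda>f. p + q - 1 - f) ` F"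
  have "card F = card A + card B"
    unfolding F_def
  proof (rule card_Un_mirror[OF finite_flips])
    fix z assume "z \<in> A \<union> B"
    then show "2 * z + 1 < n"
      using zone_high by fastforce
  qed
  moreover have "card (mismatches (flip_at F (base_word n)) p q) + 2 * card R
      = card (mismatches (base_word n) p q - (F \<union> (\<lambda>f. p + q - 1 - f) ` F)) + 2 * card F"
    unfolding R_def
  proof (rule card_mismatches_flip_at_symmetric)
    show "finite F"
      unfolding F_def using finite_flips by simp
  qed (use flip_set_symmetric in \<open>simp add: F_def\<close>)
  moreover have "card R \<le> (if p + q = n then 0 else 2)"
    unfolding R_def F_def by (rule card_flip_set_inter_mirror[OF assms])
  moreover have "2 \<le> card (mismatches (base_word n) p q - (F \<union> (\<lambda>f. p + q - 1 - f) ` F))"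
    if "p + q \<noteq> n"
    unfolding F_def using that window_left by (intro near_middle_mismatches) simp
  ultimately show ?thesis
    unfolding F_def by (cases "p + q = n") auto
qed

end

lemma long_window_mismatches:
  assumes "card A \<le> 1 \<or> card B \<le> 1" "p + q = n \<Longrightarrow> A \<inter> B = {}"
    and "d + 2 < 2 * (card A + card B)" "d + 2 * (card A + card B) < K"
  shows "d < card (mismatches (flip_at (A \<union> (\<lambda>m. n - 1 - m) ` B) (base_word n)) p q)"
proof (cases "6 dvd (n - (p + q)) \<and> n - (p + q) < 6 * K")
  case True
  then show ?thesis
    using aligned_window_mismatches[OF _ _ assms(1,2)] assms(3) by linarith
next
  case False
  then have "K \<le> card (mismatches (base_word n) p q)"
    using far_window_base_mismatches unaligned_window_base_mismatches by (meson not_le)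
  moreover have "card (A \<union> (\<lambda>m. n - 1 - m) ` B) \<le> card A + card B"
    using card_Un_le[of A "(\<lambda>m. n - 1 - m) ` B"] card_image_le[OF finite_flips(2), of "\<lambda>m. n - 1 - m"]
    by linarith
  moreover have "card (mismatches (base_word n) p q)
      \<le> card (mismatches (flip_at (A \<union> (\<lambda>m. n - 1 - m) ` B) (base_word n)) p q)
        + 2 * card (A \<union> (\<lambda>m. n - 1 - m) ` B)"
    using finite_flips by (intro card_mismatches_le_flip_at) simp
  ultimately show ?thesis
    using assms(4) unfolding distrib_left by linarith
qed

end

end

lemma long_window_mismatches_anywhere:
  fixes A B :: "nat set"
  assumes K_pos: "0 < K" and n_large: "100 * K \<le> n"
    and window: "p \<le> q" "q \<le> n" "n < 2 * (q - p)"
    and finite: "finite A" "finite B"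
    and "\<And>z. z \<in> A \<union> B \<Longrightarrow> n + 24 * K \<le> 4 * z"
    and zone_high: "\<And>z. z \<in> A \<union> B \<Longrightarrow> 2 * z + 12 * K + 3 \<le> n"
    and "card A \<le> 1 \<or> card B \<le> 1" "p + q = n \<Longrightarrow> A \<inter> B = {}"
    and "d + 2 < 2 * (card A + card B)" "d + 2 * (card A + card B) < K"
  shows "d < card (mismatches (flip_at (A \<union> (\<lambda>m. n - 1 - m) ` B) (base_word n)) p q)"
proof (cases "p + q \<le> n")
  case True
  then show ?thesis
    using assms by (intro long_window_mismatches) auto
next
  case False
  define \<rho> where "\<rho> m = n - 1 - m" for m
  have below_n: "z < n" if "z \<in> A \<union> B" for z
    using zone_high[OF that] by linarith
  have "\<rho> ` (A \<union> \<rho> ` B) = B \<union> \<rho> ` A"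
  proof -
    have "\<rho> (\<rho> m) = m" if "m \<in> B" for m
      using below_n[of m] that unfolding \<rho>_def by simp
    then have "\<rho> ` \<rho> ` B = B"
      by (force simp: image_image)
    then show ?thesis
      by (simp add: image_Un Un_commute)
  qed
  moreover have "A \<union> \<rho> ` B \<subseteq> {..<n}"
    using below_n K_pos n_large unfolding \<rho>_def by auto
  ultimately have mirror: "flip_at (A \<union> \<rho> ` B) (base_word n) (n - 1 - y) = flip_at (B \<union> \<rho> ` A) (base_word n) y"
    if "y < n" for y
    using flip_at_mirror[of n "base_word n" "A \<union> \<rho> ` B" y] base_word_reflect that
    unfolding \<rho>_def by simp
  have "d < card (mismatches (flip_at (B \<union> \<rho> ` A) (base_word n)) (n - q) (n - p))"
    unfolding \<rho>_def
  proof (rule long_window_mismatches[OF K_pos n_large _ _ finite(2,1)])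
    show "n - q + (n - p) \<le> n" "n < 2 * (n - p - (n - q))"
      using False window by linarith+
  qed (use assms False in \<open>auto simp: add.commute\<close>)
  also have "\<dots> = card (mismatches (\<lambda>y. flip_at (A \<union> \<rho> ` B) (base_word n) (n - 1 - y)) (n - q) (n - p))"
  proof (intro arg_cong[where f = card] mismatches_cong)
    fix y assume "n - q \<le> y" "y < n - p"
    then show "flip_at (B \<union> \<rho> ` A) (base_word n) y = flip_at (A \<union> \<rho> ` B) (base_word n) (n - 1 - y)"
      using mirror[of y] by simp
  qed
  also have "\<dots> = card (mismatches (flip_at (A \<union> \<rho> ` B) (base_word n)) p q)"
    by (rule card_mismatches_mirror[OF window(2)])
  finally show ?thesis
    unfolding \<rho>_def .
qed

section \<open>The hard instances\<close>

lemma l_max_le: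
  assumes "\<And>i j. i \<le> j \<Longrightarrow> j \<le> length S \<Longrightarrow> near_palindrome d (substr S i j) \<Longrightarrow> j - i \<le> L"
  shows "l_max d S \<le> L"
  unfolding l_max_def
proof (rule Max.boundedI)
  show "finite {j - i |i j. i \<le> j \<and> j \<le> length S \<and> near_palindrome d (substr S i j)}"
    by (rule finite_subset[of _ "{..length S}"]) auto
  show "{j - i |i j. i \<le> j \<and> j \<le> length S \<and> near_palindrome d (substr S i j)} \<noteq> {}"
    by (auto intro!: exI[of _ 0] simp: near_palindrome_def HAM_rev_def substr_def)
qed (use assms in blast)

lemma l_max_eq_length:
  assumes "near_palindrome d S"
  shows "l_max d S = length S"
  unfolding l_max_def
proof (rule Max_eqI)
  show "finite {j - i |i j. i \<le> j \<and> j \<le> length S \<and> near_palindrome d (substr S i j)}"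
    by (rule finite_subset[of _ "{..length S}"]) auto
  show "length S \<in> {j - i |i j. i \<le> j \<and> j \<le> length S \<and> near_palindrome d (substr S i j)}"
    using assms by (intro CollectI exI[of _ 0] exI[of _ "length S"]) (simp add: substr_def)
qed auto

text \<open>The first half encodes the set X, the second half encodes j by flipping its mirror image.\<close>

definition hard_word :: "nat \<Rightarrow> nat set \<Rightarrow> nat \<Rightarrow> bool list" where
  "hard_word n X j = map (flip_at (X \<union> {n - 1 - j}) (base_word n)) [0..<n]"

lemma length_hard_word [simp]: "length (hard_word n X j) = n"
  by (simp add: hard_word_def)

lemma hard_word_append:
  assumes "X \<subseteq> {..<M}" "M \<le> n - 1 - j" "M \<le> n"
  shows "hard_word n X j
       = map (flip_at X (base_word n)) [0..<M] @ map (flip_at {n - 1 - j} (base_word n)) [M..<n]"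
proof -
  have "[0..<n] = [0..<M] @ [M..<n]"
    using assms(3) by (metis le_add_diff_inverse upt_add_eq_append zero_le)
  moreover have "map (flip_at (X \<union> {n - 1 - j}) (base_word n)) [0..<M] = map (flip_at X (base_word n)) [0..<M]"
    using assms(2) by (intro map_cong) (auto simp: flip_at_def)
  moreover have "map (flip_at (X \<union> {n - 1 - j}) (base_word n)) [M..<n] = map (flip_at {n - 1 - j} (base_word n)) [M..<n]"
    using assms(1) by (intro map_cong) (auto simp: flip_at_def)
  ultimately show ?thesis
    unfolding hard_word_def by simp
qed

lemma l_max_hard_word_member:
  assumes "X \<subseteq> {..<n}" "j \<in> X" "2 * (card X - 1) \<le> d"
  shows "l_max d (hard_word n X j) = n"
proof -
  define \<rho> where "\<rho> m = n - 1 - m" for m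
  define F where "F = X \<union> {\<rho> j}"
  have "mismatches (base_word n) 0 n = {}"
    unfolding mismatches_def using base_word_reflect by auto
  moreover have "F \<subseteq> {..<n}"
    using assms unfolding F_def \<rho>_def by auto
  moreover have "f < n \<and> base_word n f = base_word n (n - 1 - f)" if "f \<in> F" for f
    using that \<open>F \<subseteq> {..<n}\<close> base_word_reflect[of f n] by auto
  ultimately have "mismatches (flip_at F (base_word n)) 0 n = (F - \<rho> ` F) \<union> (\<rho> ` F - F)"
    using mismatches_flip_at_symmetric[of F 0 n "base_word n"] unfolding \<rho>_def by simp
  also have "\<dots> \<subseteq> (X - {j}) \<union> \<rho> ` (X - {j})"
    using assms unfolding F_def \<rho>_def by auto
  finally have "card (mismatches (flip_at F (base_word n)) 0 n) \<le> card ((X - {j}) \<union> \<rho> ` (X - {j}))"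
    using finite_subset[OF assms(1)] by (intro card_mono) simp_all
  also have "\<dots> \<le> 2 * (card X - 1)"
    using card_Un_le[of "X - {j}" "\<rho> ` (X - {j})"] card_image_le[of "X - {j}" \<rho>] assms finite_subset[OF assms(1)]
    by simp
  finally have "HAM_rev (hard_word n X j) \<le> d"
    using assms(3) HAM_rev_substr_map[of 0 n n "flip_at F (base_word n)"]
    unfolding hard_word_def F_def \<rho>_def by (simp add: substr_def)
  then show ?thesis
    using l_max_eq_length[of d "hard_word n X j"] by (simp add: near_palindrome_def)
qed

lemma l_max_hard_word_nonmember:
  assumes "0 < K" "100 * K \<le> n" "finite X" "j \<notin> X"
    and "\<And>z. z \<in> X \<union> {j} \<Longrightarrow> n + 24 * K \<le> 4 * z"
    and "\<And>z. z \<in> X \<union> {j} \<Longrightarrow> 2 * z + 12 * K + 3 \<le> n"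
    and "d + 2 < 2 * (card X + 1)" "d + 2 * (card X + 1) < K"
  shows "2 * l_max d (hard_word n X j) \<le> n"
proof -
  have "l_max d (hard_word n X j) \<le> n div 2"
  proof (rule l_max_le)
    fix p q assume window: "p \<le> q" "q \<le> length (hard_word n X j)"
      and near: "near_palindrome d (substr (hard_word n X j) p q)"
    show "q - p \<le> n div 2"
    proof (rule ccontr)
      assume "\<not> q - p \<le> n div 2"
      then have "d < card (mismatches (flip_at (X \<union> (\<lambda>m. n - 1 - m) ` {j}) (base_word n)) p q)"
        using assms window by (intro long_window_mismatches_anywhere) auto
      then show False
        using near window HAM_rev_substr_map[of p q n]
        unfolding near_palindrome_def hard_word_def by simp
    qed
  qed
  then show ?thesis
    by linarith
qed

definition candidates :: "nat \<Rightarrow> nat set" where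
  "candidates n = {3 * (n div 10)..<4 * (n div 10)}"

lemma hard_words_separate:
  assumes n_large: "1200 * d + 3600 \<le> n"
    and "X \<subseteq> candidates n" "X' \<subseteq> candidates n"
    and "card X = d div 2 + 1" "card X' = d div 2 + 1" "X \<noteq> X'"
  shows "\<exists>j\<in>candidates n. l_max d (hard_word n X j) = n \<and> 2 * l_max d (hard_word n X' j) \<le> n"
proof -
  have fin: "finite X" "finite X'"
    using assms(2,3) finite_subset unfolding candidates_def by blast+
  obtain j where j: "j \<in> X" "j \<notin> X'"
    using assms(4-6) card_subset_eq[OF fin(2)] by (metis subsetI)
  have t: "n = 10 * (n div 10) + n mod 10" "n mod 10 < 10"
    by simp_all
  have dd: "d = 2 * (d div 2) + d mod 2" "d mod 2 < 2"
    by simp_all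
  have cand: "n + 24 * (2 * d + 6) \<le> 4 * z" "2 * z + 12 * (2 * d + 6) + 3 \<le> n" "z < n"
    if "z \<in> candidates n" for z
    using that n_large t unfolding candidates_def distrib_left by auto
  have "l_max d (hard_word n X j) = n"
    using assms(2,4) j(1) cand dd by (intro l_max_hard_word_member) auto
  moreover have "2 * l_max d (hard_word n X' j) \<le> n"
  proof (rule l_max_hard_word_nonmember[where K = "2 * d + 6"])
    show "100 * (2 * d + 6) \<le> n" "d + 2 < 2 * (card X' + 1)" "d + 2 * (card X' + 1) < 2 * d + 6"
      using n_large assms(5) dd unfolding distrib_left by linarith+
  qed (use fin j assms(2,3) cand in auto)
  ultimately show ?thesis
    using j(1) assms(2) by blast
qed

section \<open>The fooling-set bound\<close>

lemma prob_bind_pmf_finite_support: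
  fixes M :: "'a pmf" and N :: "'a \<Rightarrow> 'b pmf"
  assumes "finite A" "set_pmf M \<subseteq> A"
  shows "measure_pmf.prob (bind_pmf M N) X = (\<Sum>a\<in>A. pmf M a * measure_pmf.prob (N a) X)"
proof -
  have "emeasure (measure_pmf (bind_pmf M N)) X = (\<Sum>a\<in>A. emeasure (measure_pmf (N a)) X * pmf M a)"
    unfolding emeasure_bind_pmf
    by (rule nn_integral_measure_pmf_support) (use assms in auto)
  also have "\<dots> = (\<Sum>a\<in>A. ennreal (pmf M a * measure_pmf.prob (N a) X))"
    by (simp add: measure_pmf.emeasure_eq_measure ennreal_mult' mult.commute)
  also have "\<dots> = ennreal (\<Sum>a\<in>A. pmf M a * measure_pmf.prob (N a) X)"
    by (rule sum_ennreal) auto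
  finally show ?thesis
    by (simp add: measure_def sum_nonneg)
qed

lemma run_states_append:
  "run_states init delta i (xs @ ys) = run_states (run_states init delta i xs) delta (i + length xs) ys"
  by (induction xs arbitrary: init i) auto

lemma run_states_bind:
  "run_states init delta i ys = init \<bind> (\<lambda>\<sigma>. run_states (return_pmf \<sigma>) delta i ys)"
proof (induction ys arbitrary: init i)
  case Nil
  then show ?case
    by (simp add: bind_return_pmf')
next
  case (Cons b bs)
  have step: "run_states (return_pmf q) delta i (b # bs)
      = delta i q b \<bind> (\<lambda>\<sigma>. run_states (return_pmf \<sigma>) delta (Suc i) bs)" for q
  proof -
    have "run_states (return_pmf q) delta i (b # bs) = run_states (delta i q b) delta (Suc i) bs"
      by (simp add: bind_return_pmf)
    also have "\<dots> = delta i q b \<bind> (\<lambda>\<sigma>. run_states (return_pmf \<sigma>) delta (Suc i) bs)"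
      by (rule Cons.IH)
    finally show ?thesis .
  qed
  have "run_states init delta i (b # bs) = run_states (init \<bind> (\<lambda>q. delta i q b)) delta (Suc i) bs"
    by simp
  also have "\<dots> = (init \<bind> (\<lambda>q. delta i q b)) \<bind> (\<lambda>\<sigma>. run_states (return_pmf \<sigma>) delta (Suc i) bs)"
    by (rule Cons.IH)
  also have "\<dots> = init \<bind> (\<lambda>q. run_states (return_pmf q) delta i (b # bs))"
    by (simp only: step bind_assoc_pmf)
  finally show ?case .
qed

lemma run_states_space:
  assumes "uses_space s init delta"
  shows "set_pmf (run_states init delta i xs) \<subseteq> {..<2^s}"
  using assms
proof (induction xs arbitrary: init i)
  case Nil
  then show ?case
    by (simp add: uses_space_def)
next
  case (Cons b bs)
  have "uses_space s (init \<bind> (\<lambda>q. delta i q b)) delta"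
    using Cons.prems unfolding uses_space_def by (fastforce simp: subset_iff)
  then show ?case
    using Cons.IH by simp
qed

lemma card_fooling_family_le:
  fixes Fam :: "'x set" and pre :: "'x \<Rightarrow> bool list" and Q :: "'q set"
    and suf :: "'q \<Rightarrow> bool list" and Win :: "'x \<Rightarrow> 'q \<Rightarrow> real set"
  assumes space: "uses_space s init delta"
    and fin: "finite Q" and Q_small: "2 * real (card Q) < real n"
    and length_pre: "\<And>x. x \<in> Fam \<Longrightarrow> length (pre x) = M"
    and correct: "\<And>x q. x \<in> Fam \<Longrightarrow> q \<in> Q \<Longrightarrow>
        measure_pmf.prob (run_alg init delta out (pre x @ suf q)) (Win x q) \<ge> 1 - 1 / real n"
    and separated: "\<And>x x'. x \<in> Fam \<Longrightarrow> x' \<in> Fam \<Longrightarrow> x \<noteq> x' \<Longrightarrow> \<exists>q\<in>Q. Win x q \<inter> Win x' q = {}"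
  shows "card Fam \<le> 2 ^ s"
proof -
  define \<nu> where "\<nu> \<sigma> q = run_states (return_pmf \<sigma>) delta M (suf q) \<bind> out" for \<sigma> q
  define \<mu> where "\<mu> x = run_states init delta 0 (pre x)" for x
  define err where "err x \<sigma> q = 1 - measure_pmf.prob (\<nu> \<sigma> q) (Win x q)" for x \<sigma> q
  define S where "S = {..<(2::nat) ^ s}"
  have finS: "finite S"
    by (simp add: S_def)
  have supp: "set_pmf (\<mu> x) \<subseteq> S" for x
    unfolding \<mu>_def S_def by (rule run_states_space[OF space])
  have err_nonneg: "err x \<sigma> q \<ge> 0" for x \<sigma> q
    unfolding err_def by (simp add: measure_pmf.prob_le_1)
  have split: "run_alg init delta out (pre x @ suf q) = \<mu> x \<bind> (\<lambda>\<sigma>. \<nu> \<sigma> q)" if "x \<in> Fam" for x q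
  proof -
    have "run_alg init delta out (pre x @ suf q) = run_states (\<mu> x) delta M (suf q) \<bind> out"
      unfolding run_alg_def \<mu>_def by (simp add: run_states_append length_pre[OF that])
    also have "\<dots> = \<mu> x \<bind> (\<lambda>\<sigma>. \<nu> \<sigma> q)"
      unfolding \<nu>_def by (subst run_states_bind) (simp add: bind_assoc_pmf)
    finally show ?thesis .
  qed
  text \<open>By averaging, each member of the family has a memory state after its prefix from which
    every suffix of Q is answered correctly with total error below 1/2.\<close>
  have "\<exists>\<sigma>\<in>S. (\<Sum>q\<in>Q. err x \<sigma> q) < 1/2" if x: "x \<in> Fam" for x
  proof (rule ccontr)
    assume "\<not> ?thesis"
    then have ge: "\<And>\<sigma>. \<sigma> \<in> S \<Longrightarrow> (\<Sum>q\<in>Q. err x \<sigma> q) \<ge> 1/2"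
      by force
    have "(\<Sum>\<sigma>\<in>S. pmf (\<mu> x) \<sigma> * (\<Sum>q\<in>Q. err x \<sigma> q))
          = (\<Sum>q\<in>Q. (\<Sum>\<sigma>\<in>S. pmf (\<mu> x) \<sigma>) - (\<Sum>\<sigma>\<in>S. pmf (\<mu> x) \<sigma> * measure_pmf.prob (\<nu> \<sigma> q) (Win x q)))"
      unfolding err_def
      by (simp add: sum_distrib_left sum_subtractf right_diff_distrib sum.swap[of _ S Q] mult.commute)
    also have "\<dots> = (\<Sum>q\<in>Q. 1 - measure_pmf.prob (run_alg init delta out (pre x @ suf q)) (Win x q))"
      using split[OF x] sum_pmf_eq_1[OF finS supp] by (simp add: prob_bind_pmf_finite_support[OF finS supp])
    also have "\<dots> \<le> (\<Sum>q\<in>Q. 1 / real n)"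
      by (rule sum_mono) (use correct[OF x] in force)
    also have "\<dots> < 1/2"
      using Q_small by (simp add: field_simps)
    finally have "(\<Sum>\<sigma>\<in>S. pmf (\<mu> x) \<sigma> * (\<Sum>q\<in>Q. err x \<sigma> q)) < 1/2" .
    moreover have "(\<Sum>\<sigma>\<in>S. pmf (\<mu> x) \<sigma> * (1/2)) \<le> (\<Sum>\<sigma>\<in>S. pmf (\<mu> x) \<sigma> * (\<Sum>q\<in>Q. err x \<sigma> q))"
      by (rule sum_mono, rule mult_left_mono) (use ge in auto)
    moreover have "(\<Sum>\<sigma>\<in>S. pmf (\<mu> x) \<sigma> * (1/2)) = 1/2"
      using sum_pmf_eq_1[OF finS supp] by (simp add: sum_divide_distrib[symmetric])
    ultimately show False
      by linarith
  qed
  then obtain f where f: "\<And>x. x \<in> Fam \<Longrightarrow> f x \<in> S \<and> (\<Sum>q\<in>Q. err x (f x) q) < 1/2"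
    by metis
  have err_small: "err x (f x) q < 1/2" if "x \<in> Fam" "q \<in> Q" for x q
  proof -
    have "err x (f x) q \<le> (\<Sum>q\<in>Q. err x (f x) q)"
      by (rule member_le_sum) (use that fin err_nonneg in auto)
    then show ?thesis
      using f[OF that(1)] by linarith
  qed
  have "inj_on f Fam"
  proof (rule inj_onI, rule ccontr)
    fix x x' assume xx: "x \<in> Fam" "x' \<in> Fam" "f x = f x'" "x \<noteq> x'"
    then obtain q where q: "q \<in> Q" "Win x q \<inter> Win x' q = {}"
      using separated by blast
    have "measure_pmf.prob (\<nu> (f x) q) (Win x q \<union> Win x' q)
          = measure_pmf.prob (\<nu> (f x) q) (Win x q) + measure_pmf.prob (\<nu> (f x) q) (Win x' q)"
      using q(2) by (intro measure_pmf.finite_measure_Union) auto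
    moreover have "measure_pmf.prob (\<nu> (f x) q) (Win x q \<union> Win x' q) \<le> 1"
      by (rule measure_pmf.prob_le_1)
    ultimately show False
      using err_small[OF xx(1) q(1)] err_small[OF xx(2) q(1)] xx(3) unfolding err_def by simp
  qed
  then have "card Fam = card (f ` Fam)"
    by (simp add: card_image)
  also have "\<dots> \<le> card S"
    by (rule card_mono[OF finS]) (use f in auto)
  finally show ?thesis
    by (simp add: S_def)
qed

lemma estimate_ranges_disjoint:
  fixes \<epsilon> :: real and n l :: nat
  assumes "0 < \<epsilon>" "\<epsilon> < 1" "0 < n" "2 * l \<le> n"
  shows "{x. x \<le> real n \<and> real n \<le> (1 + \<epsilon>) * x} \<inter> {x. x \<le> real l \<and> real l \<le> (1 + \<epsilon>) * x} = {}"
proof (rule ccontr)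
  assume "\<not> ?thesis"
  then obtain x where x: "real n \<le> (1 + \<epsilon>) * x" "x \<le> real l"
    by auto
  have "(1 + \<epsilon>) * x \<le> (1 + \<epsilon>) * real l"
    using x(2) assms(1) by (intro mult_left_mono) auto
  moreover have "(1 + \<epsilon>) * real l \<le> (1 + \<epsilon>) * (real n / 2)"
    using assms by (intro mult_left_mono) auto
  moreover have "0 < (1 - \<epsilon>) * (real n / 2)"
    using assms by simp
  ultimately show False
    using x(1) by (simp add: algebra_simps)
qed

section \<open>The space lower bound\<close>

lemma small_d_bounds:
  fixes d n :: nat
  assumes d_small: "real d \<le> sqrt (real n) / 1000" and n_large: "1000000 \<le> n"
  shows "1000 \<le> sqrt (real n)" "1200 * d + 3600 \<le> n" "real (d div 2 + 1) \<le> sqrt (real n)"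
proof -
  have "sqrt 1000000 \<le> sqrt (real n)"
    using n_large by (subst real_sqrt_le_iff) simp
  moreover have "sqrt (1000000::real) = 1000"
    by (rule real_sqrt_unique) simp_all
  ultimately show root: "1000 \<le> sqrt (real n)"
    by simp
  have "1000 * sqrt (real n) \<le> sqrt (real n) * sqrt (real n)"
    using root by (intro mult_right_mono) auto
  then have "1000 * sqrt (real n) \<le> real n"
    by simp
  then have "1200 * real d + 3600 \<le> real n"
    using d_small root by linarith
  then show "1200 * d + 3600 \<le> n"
    by linarith
  have "real (d div 2) \<le> real d"
    by simp
  then show "real (d div 2 + 1) \<le> sqrt (real n)"
    using d_small root by linarith
qed

lemma space_bound_of_binomial:
  fixes d n s t :: nat
  assumes d_small: "real d \<le> sqrt (real n) / 1000" and n_large: "1000000 \<le> n"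
    and t: "10 * t \<le> n" "n < 10 * t + 10" and binom: "t choose (d div 2 + 1) \<le> 2 ^ s"
  shows "1/16 * real d * ln (real n) \<le> real s"
proof -
  define k where "k = d div 2 + 1"
  define S where "S = sqrt (real n)"
  have root: "1000 \<le> S" and k_le: "real k \<le> S"
    using small_d_bounds[OF d_small n_large] unfolding k_def S_def by auto
  have n_eq: "real n = S * S"
    unfolding S_def by simp
  have k_pos: "0 < real k"
    unfolding k_def by simp
  have k_ge: "real d / 2 \<le> real k"
    unfolding k_def by linarith
  have t_ge: "real n / 20 \<le> real t"
    using t n_large by linarith
  have "S / 20 * real k \<le> S / 20 * S"
    using k_le root by (intro mult_left_mono) auto
  also have "\<dots> \<le> real t"
    using t_ge n_eq by simp
  finally have ratio: "S / 20 \<le> real t / real k"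
    using k_pos by (simp add: le_divide_eq)
  have "S \<le> S * S / 20"
    using root by (simp add: le_divide_eq mult_right_mono)
  then have "real k \<le> real t"
    using k_le t_ge n_eq by linarith
  then have "k \<le> t"
    by simp
  then have "(real t / real k) ^ k \<le> real (t choose k)"
    by (rule binomial_ge_n_over_k_pow_k)
  also have "\<dots> \<le> 2 ^ s"
    using binom unfolding k_def by (metis of_nat_le_iff of_nat_numeral of_nat_power)
  finally have "(real t / real k) ^ k \<le> 2 ^ s" .
  moreover have tk_pos: "0 < real t / real k"
    using ratio root by linarith
  ultimately have log_binom: "real k * ln (real t / real k) \<le> real s * ln 2"
    using ln_le_cancel_iff[of "(real t / real k) ^ k" "2 ^ s"] by (simp add: ln_realpow)
  have log_ratio: "ln (real n) / 6 \<le> ln (real t / real k)"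
  proof -
    have "ln (S / 20) = ln (real n) / 2 - ln 20"
      using root n_large unfolding S_def by (simp add: ln_div ln_sqrt)
    moreover have "ln ((20::real) ^ 3) \<le> ln (real n)"
      using n_large by (subst ln_le_cancel_iff) auto
    moreover have "ln ((20::real) ^ 3) = 3 * ln 20"
      by (subst ln_realpow) auto
    moreover have "ln (S / 20) \<le> ln (real t / real k)"
      using ratio root tk_pos by (subst ln_le_cancel_iff) auto
    ultimately show ?thesis
      by linarith
  qed
  have "0 \<le> ln (real n)"
    using n_large by simp
  then have "real d / 2 * (ln (real n) / 6) \<le> real k * (ln (real n) / 6)"
    using k_ge by (intro mult_right_mono) auto
  also have "\<dots> \<le> real k * ln (real t / real k)"
    using log_ratio k_pos by (intro mult_left_mono) auto
  also have "\<dots> \<le> real s * ln 2"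
    by (rule log_binom)
  also have "\<dots> \<le> real s"
    using ln_2_less_1 by (intro mult_left_le) auto
  finally show ?thesis
    by simp
qed

lemma space_lower_bound:
  fixes \<epsilon> :: real and d n s :: nat
  assumes eps: "0 < \<epsilon>" "\<epsilon> < 1"
    and d_small: "real d \<le> sqrt (real n) / 1000" and n_large: "1000000 \<le> n"
    and space: "uses_space s init delta"
    and correct: "\<And>S :: bool list. length S = n \<Longrightarrow>
          measure_pmf.prob (run_alg init delta out S)
            {x. x \<le> real (l_max d S) \<and> real (l_max d S) \<le> (1 + \<epsilon>) * x} \<ge> 1 - 1 / real n"
  shows "1/16 * real d * ln (real n) \<le> real s"
proof -
  define t where "t = n div 10"
  define M where "M = n div 2"
  define Fam where "Fam = {X. X \<subseteq> candidates n \<and> card X = d div 2 + 1}"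
  define pre where "pre X = map (flip_at X (base_word n)) [0..<M]" for X
  define suf where "suf j = map (flip_at {n - 1 - j} (base_word n)) [M..<n]" for j
  define Win where "Win X j = {x. x \<le> real (l_max d (hard_word n X j))
      \<and> real (l_max d (hard_word n X j)) \<le> (1 + \<epsilon>) * x}" for X j
  have "n = 10 * t + n mod 10" "n mod 10 < 10" "n = 2 * M + n mod 2" "n mod 2 < 2"
    unfolding t_def M_def by simp_all
  then have t: "10 * t \<le> n" "n < 10 * t + 10" and M: "2 * M \<le> n" "n \<le> 2 * M + 1"
    by linarith+
  have word: "hard_word n X j = pre X @ suf j" if "X \<subseteq> candidates n" "j \<in> candidates n" for X j
    unfolding pre_def suf_def using that t M n_large
    by (intro hard_word_append) (auto simp: candidates_def subset_iff)
  have "card Fam \<le> 2 ^ s"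
  proof (rule card_fooling_family_le[OF space, where Q = "candidates n" and Win = Win and M = M])
    show "finite (candidates n)" "2 * real (card (candidates n)) < real n"
      using t n_large by (simp_all add: candidates_def)
    show "length (pre X) = M" for X
      by (simp add: pre_def)
    fix X X' j assume X: "X \<in> Fam" and j: "j \<in> candidates n"
    show "1 - 1 / real n \<le> measure_pmf.prob (run_alg init delta out (pre X @ suf j)) (Win X j)"
      using correct[of "hard_word n X j"] word[of X j] X j unfolding Win_def Fam_def by simp
  next
    fix X X' assume "X \<in> Fam" "X' \<in> Fam" "X \<noteq> X'"
    then obtain j where "j \<in> candidates n" "l_max d (hard_word n X j) = n" "2 * l_max d (hard_word n X' j) \<le> n"
      using hard_words_separate small_d_bounds(2)[OF d_small n_large] unfolding Fam_def by blast
    moreover have "0 < n"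
      using n_large by simp
    ultimately have "Win X j \<inter> Win X' j = {}"
      unfolding Win_def using estimate_ranges_disjoint[OF eps] by simp
    then show "\<exists>j\<in>candidates n. Win X j \<inter> Win X' j = {}"
      using \<open>j \<in> candidates n\<close> by blast
  qed
  moreover have "card Fam = t choose (d div 2 + 1)"
    unfolding Fam_def t_def candidates_def by (simp add: n_subsets)
  ultimately show ?thesis
    using space_bound_of_binomial[OF d_small n_large t] by simp
qed

theorem theorem4:
  fixes \<epsilon> :: real and d :: "nat \<Rightarrow> nat"
  assumes "0 < \<epsilon>" and "\<epsilon> < 1"
    and "(\<lambda>n. real (d n)) \<in> o(\<lambda>n. sqrt (real n))"
  shows "\<exists>c>0. \<exists>N. \<forall>n\<ge>N. \<forall>s init delta out.
           uses_space s init delta \<and>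
           (\<forall>S :: bool list. length S = n \<longrightarrow>
              measure_pmf.prob (run_alg init delta out S)
                {x. x \<le> real (l_max (d n) S) \<and> real (l_max (d n) S) \<le> (1 + \<epsilon>) * x}
              \<ge> 1 - 1 / real n)
           \<longrightarrow> real s \<ge> c * real (d n) * ln (real n)"
proof -
  have "eventually (\<lambda>n. norm (real (d n)) \<le> 1/1000 * norm (sqrt (real n))) at_top"
    using assms(3) by (rule landau_o.smallD) simp
  then obtain N where N: "\<And>n. N \<le> n \<Longrightarrow> real (d n) \<le> sqrt (real n) / 1000"
    unfolding eventually_at_top_linorder by auto
  show ?thesis
  proof (intro exI[of _ "1/16"] conjI exI[of _ "max N 1000000"] allI impI)
    fix n s init delta out
    assume "max N 1000000 \<le> n"
      and "uses_space s init delta \<and>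
        (\<forall>S :: bool list. length S = n \<longrightarrow>
           measure_pmf.prob (run_alg init delta out S)
             {x. x \<le> real (l_max (d n) S) \<and> real (l_max (d n) S) \<le> (1 + \<epsilon>) * x} \<ge> 1 - 1 / real n)"
    then show "real s \<ge> 1/16 * real (d n) * ln (real n)"
      using N[of n] by (intro space_lower_bound[OF assms(1,2)]) auto
  qed simp
qed

end
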